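(* Let $a,b,c,d,e,f,g,q,r,s,t,u,v,w$ be nonzero complex numbers with $a^3=bcdefg$, $w^3=qrstuv$ and $$\max(|q|,|r|,|s|,|t|,|u|,|v|,|w/q|,|w/r|,|w/s|,|w/t|,|w/u|,|w/v|)<1,$$ such that all expressions below are well defined. Then \begin{align*} &\sum_{k=-\infty}^\infty\frac{(1-aw^k)(1-a(w/tu)^k/(ef))(1-fg(uv/w)^k/a)(1-eg(tv/w)^k/a)}{(1-g(v/w)^k/a)(1-efg(tuv/w)^k/a)(1-a(w/u)^k/f)(1-a(w/t)^k/e)}\\ &\quad\times\frac{(b;q)_k(c;r)_k(d;s)_k(e;t)_k(f;u)_k(g;v)_k}{(a/b;w/q)_k(a/c;w/r)_k(a/d;w/s)_k(a/e;w/t)_k(a/f;w/u)_k(a/g;w/v)_k}\\ &\quad\times\Bigg[1-\frac{(1-a(w/rs)^k/(cd))(1-a(w/qs)^k/(bd))(1-a(w/qr)^k/(bc))}{(1-a(w/q)^k/b)(1-a(w/r)^k/c)(1-a(w/s)^k/d)}\\ &\qquad\qquad\times\frac{(1-et^k)(1-fu^k)(1-gv^k)}{(1-fg(uv/w)^k/a)(1-eg(tv/w)^k/a)(1-ef(tu/w)^k/a)}\Bigg]\\ &=\frac{(bw/(aq);w/q)_\infty(cw/(ar);w/r)_\infty(dw/(as);w/s)_\infty(ew/(at);w/t)_\infty(fw/(au);w/u)_\infty(gw/(av);w/v)_\infty}{(q/b;q)_\infty(r/c;r)_\infty(s/d;s)_\infty(t/e;t)_\infty(u/f;u)_\infty(v/g;v)_\infty}\\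 &\quad-\frac{(b;q)_\infty(c;r)_\infty(d;s)_\infty(e;t)_\infty(f;u)_\infty(g;v)_\infty}{(a/b;w/q)_\infty(a/c;w/r)_\infty(a/d;w/s)_\infty(a/e;w/t)_\infty(a/f;w/u)_\infty(a/g;w/v)_\infty}. \end{align*}
   Context: For $|q|<1$ and $x\in\mathbb C$, $(x;q)_\infty=\prod_{j\ge0}(1-xq^j)$, and for any integer $k$, $(x;q)_k=(x;q)_\infty/(xq^k;q)_\infty$ (so $(x;q)_k=\prod_{j=0}^{k-1}(1-xq^j)$ for $k\ge0$). Here e.g. $(w/tu)^k$ means $(w/(tu))^k$. The bilateral sum means $\lim_{m,n\to\infty}\sum_{k=-m}^n$. *)

theory Defs
  imports "HOL-Analysis.Analysis"
begin

definition qinf :: "complex \<Rightarrow> complex \<Rightarrow> complex" where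
  "qinf x q = (\<Prod>j. (1 - x * q ^ j))"

text \<open>(x;q)_k for integer k: the finite product for k >= 0; for k < 0 it is
  (x;q)_inf / (x q^k;q)_inf = 1 / prod_{j=1}^{-k} (1 - x q^(-j)).\<close>
definition qpoch :: "complex \<Rightarrow> complex \<Rightarrow> int \<Rightarrow> complex" where
  "qpoch x q k = (if 0 \<le> k then (\<Prod>j<nat k. (1 - x * q ^ j))
                  else 1 / (\<Prod>j\<in>{1..nat (- k)}. (1 - x / q ^ j)))"

definition qpoch_ok :: "complex \<Rightarrow> complex \<Rightarrow> int \<Rightarrow> bool" where
  "qpoch_ok x q k = (k < 0 \<longrightarrow> (\<Prod>j\<in>{1..nat (- k)}. (1 - x / q ^ j)) \<noteq> 0)"

definition bilateral_sums :: "(int \<Rightarrow> complex) \<Rightarrow> complex \<Rightarrow> bool" where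
  "bilateral_sums F L =
     (((\<lambda>(m::nat, n::nat). \<Sum>k\<in>{- int m..int n}. F k) \<longlongrightarrow> L)
        (sequentially \<times>\<^sub>F sequentially))"

end

theory Submission
  imports Defs
begin

text \<open>
Write P(k) for the ratio of the twelve q-shifted factorials in the summand. Since
(x;p)_(k+1) = (x;p)_k (1 - x p^k), the difference P(k) - P(k+1) is P(k) times
1 - \<Prod> (1 - X)/(1 - A/X), with A = a w^k and X running over b q^k, ..., g v^k; the
balancing conditions give A^3 = BCDEFG, and under this relation a rational identity in
seven variables (resting on two polynomial factorisations) shows that this factor is exactly
the non-Pochhammer part of the summand. The bilateral series therefore telescopes to
lim P(-m) - lim P(n). The limit n \<rightarrow> \<infinity> is the quotient of infinite products on the right.
For m \<rightarrow> \<infinity> the reflection (x;p)_(-m) = \<Prod>_(j=1..m) (-p^j/x) / (p/x;p)_m turns P(-m) into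
the other quotient, the scalar prefactors cancelling because a^6 = (bcdefg)^2 and
w^6 = (qrstuv)^2.
\<close>

lemma qpoch_of_nat [simp]: "qpoch x p (int n) = (\<Prod>j<n. 1 - x * p ^ j)"
  by (simp add: qpoch_def)

lemma qpoch_minus_of_nat: "qpoch x p (- int m) = 1 / (\<Prod>j\<in>{1..m}. 1 - x / p ^ j)"
  by (cases "m = 0") (auto simp: qpoch_def)

lemma qpoch_add_one:
  assumes "qpoch_ok x p k"
  shows "qpoch x p (k + 1) = qpoch x p k * (1 - x * p powi k)"
proof (cases "0 \<le> k")
  case True
  then obtain n where "k = int n" by (metis nonneg_eq_int)
  moreover have "int n + 1 = int (Suc n)" by simp
  ultimately show ?thesis by (simp only: qpoch_of_nat power_int_of_nat) simp
next
  case False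
  then obtain n where k: "k = - int (Suc n)"
    using negD[of k] by auto
  have k1: "k + 1 = - int n" using k by simp
  define y where "y = x / p ^ Suc n"
  have split: "(\<Prod>j\<in>{1..Suc n}. 1 - x / p ^ j) = (\<Prod>j\<in>{1..n}. 1 - x / p ^ j) * (1 - y)"
    by (simp add: y_def atLeastAtMostSuc_conv mult.commute)
  have "(\<Prod>j\<in>{1..Suc n}. 1 - x / p ^ j) \<noteq> 0"
    using assms k by (simp add: qpoch_ok_def nat_add_distrib)
  then have "1 - y \<noteq> 0" unfolding split by simp
  moreover have "x * p powi k = y"
    unfolding k power_int_minus power_int_of_nat y_def by (simp add: divide_inverse)
  moreover have "qpoch x p k = 1 / ((\<Prod>j\<in>{1..n}. 1 - x / p ^ j) * (1 - y))"
    unfolding k qpoch_minus_of_nat split ..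
  ultimately show ?thesis
    unfolding k1 qpoch_minus_of_nat by simp
qed

text \<open>No non-vanishing hypothesis is needed: if (p/x;p)_m = 0, both sides are 0 by the
  convention z/0 = 0.\<close>

lemma qpoch_minus_of_nat_reflect:
  assumes "x \<noteq> 0" "p \<noteq> 0"
  shows "qpoch x p (- int m) = (\<Prod>j\<in>{1..m}. - (p ^ j / x)) / qpoch (p / x) p (int m)"
proof -
  have "(\<Prod>j\<in>{1..m}. 1 - x / p ^ j) = (\<Prod>j\<in>{1..m}. - (x / p ^ j)) * (\<Prod>j<m. 1 - p / x * p ^ j)"
  proof (induction m)
    case (Suc m)
    have "1 - x / p ^ Suc m = - (x / p ^ Suc m) * (1 - p / x * p ^ m)"
      using assms by (simp add: field_simps)
    with Suc show ?case by (simp add: atLeastAtMostSuc_conv)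
  qed simp
  moreover have "(\<Prod>j\<in>{1..m}. - (p ^ j / x)) = inverse (\<Prod>j\<in>{1..m}. - (x / p ^ j))"
    by (simp add: prod_inversef[symmetric])
  ultimately show ?thesis
    unfolding qpoch_minus_of_nat qpoch_of_nat by (simp add: divide_inverse inverse_mult_distrib)
qed

lemma LIMSEQ_qinf:
  assumes "norm p < 1"
  shows "(\<lambda>n. \<Prod>j<n. 1 - x * p ^ j) \<longlonglongrightarrow> qinf x p"
proof -
  have "summable (\<lambda>j. norm ((1 - x * p ^ j) - 1))"
    using assms by (simp add: norm_mult norm_power summable_mult summable_geometric)
  then have "convergent_prod (\<lambda>j. 1 - x * p ^ j)"
    by (intro abs_convergent_prod_imp_convergent_prod summable_imp_abs_convergent_prod)
  then have "(\<lambda>n. \<Prod>j\<le>n. 1 - x * p ^ j) \<longlonglongrightarrow> qinf x p"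
    unfolding qinf_def by (rule convergent_prod_LIMSEQ)
  then have "(\<lambda>n. \<Prod>j<Suc n. 1 - x * p ^ j) \<longlonglongrightarrow> qinf x p"
    by (simp add: lessThan_Suc_atMost)
  then show ?thesis by (rule LIMSEQ_imp_Suc)
qed

lemma bilateral_sums_telescope:
  assumes "\<And>k. F k = P k - P (k + 1)"
    and "(\<lambda>m. P (- int m)) \<longlonglongrightarrow> L1" and "(\<lambda>n. P (int n)) \<longlonglongrightarrow> L2"
  shows "bilateral_sums F (L1 - L2)"
proof -
  have telescope: "(\<Sum>k\<in>{lo..<lo + int d}. F k) = P lo - P (lo + int d)" for lo d
  proof (induction d)
    case (Suc d)
    have "{lo..<lo + int (Suc d)} = insert (lo + int d) {lo..<lo + int d}" by auto
    with Suc show ?case by (simp add: assms(1) ac_simps)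
  qed simp
  have partial_sum: "(\<Sum>k\<in>{- int m..int n}. F k) = P (- int m) - P (int (Suc n))" for m n
  proof -
    have "{- int m..int n} = {- int m..<- int m + int (m + Suc n)}" by auto
    then show ?thesis using telescope[of "- int m" "m + Suc n"] by simp
  qed
  have "(\<lambda>n. P (int (Suc n))) \<longlonglongrightarrow> L2"
    using LIMSEQ_Suc[OF assms(3)] .
  then show ?thesis
    unfolding bilateral_sums_def partial_sum case_prod_beta
    by (intro tendsto_diff filterlim_compose[OF assms(2) filterlim_fst]
        filterlim_compose[OF _ filterlim_snd])
qed

definition poised_ratio ::
    "complex \<Rightarrow> complex \<Rightarrow> 'i set \<Rightarrow> ('i \<Rightarrow> complex) \<Rightarrow> ('i \<Rightarrow> complex) \<Rightarrow> int \<Rightarrow> complex" where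
  "poised_ratio a w I x p k = (\<Prod>i\<in>I. qpoch (x i) (p i) k / qpoch (a / x i) (w / p i) k)"

lemma poised_ratio_add_one:
  assumes "\<And>i. i \<in> I \<Longrightarrow> qpoch_ok (x i) (p i) k \<and> qpoch_ok (a / x i) (w / p i) k"
  shows "poised_ratio a w I x p (k + 1) = poised_ratio a w I x p k *
    (\<Prod>i\<in>I. (1 - x i * p i powi k) / (1 - a * w powi k / (x i * p i powi k)))"
proof -
  have "a / x i * (w / p i) powi k = a * w powi k / (x i * p i powi k)" for i
    by (simp add: power_int_divide_distrib)
  with assms show ?thesis
    unfolding poised_ratio_def prod.distrib[symmetric]
    by (intro prod.cong refl) (simp add: qpoch_add_one)
qed

lemma LIMSEQ_poised_ratio:
  assumes "\<And>i. i \<in> I \<Longrightarrow> norm (p i) < 1" "\<And>i. i \<in> I \<Longrightarrow> norm (w / p i) < 1"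
    and "\<And>i. i \<in> I \<Longrightarrow> qinf (a / x i) (w / p i) \<noteq> 0"
  shows "(\<lambda>n. poised_ratio a w I x p (int n))
    \<longlonglongrightarrow> (\<Prod>i\<in>I. qinf (x i) (p i) / qinf (a / x i) (w / p i))"
  unfolding poised_ratio_def qpoch_of_nat
  by (intro tendsto_prod tendsto_divide LIMSEQ_qinf assms)

lemma poised_ratio_minus_of_nat:
  assumes "finite I" "a \<noteq> 0" "w \<noteq> 0" "\<And>i. i \<in> I \<Longrightarrow> x i \<noteq> 0" "\<And>i. i \<in> I \<Longrightarrow> p i \<noteq> 0"
    and "a ^ card I = (\<Prod>i\<in>I. x i) ^ 2" "w ^ card I = (\<Prod>i\<in>I. p i) ^ 2"
  shows "poised_ratio a w I x p (- int m) =
    (\<Prod>i\<in>I. qpoch (x i * w / (a * p i)) (w / p i) (int m) / qpoch (p i / x i) (p i) (int m))"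
proof -
  \<comment> \<open>the quotient of the prefactors produced by reflecting numerator and denominator\<close>
  define c where "c i j = a / x i ^ 2 * (p i ^ 2 / w) ^ j" for i j
  have pair: "qpoch (x i) (p i) (- int m) / qpoch (a / x i) (w / p i) (- int m) =
    (\<Prod>j\<in>{1..m}. c i j) *
    (qpoch (x i * w / (a * p i)) (w / p i) (int m) / qpoch (p i / x i) (p i) (int m))"
    if "i \<in> I" for i
  proof -
    have nz: "x i \<noteq> 0" "p i \<noteq> 0" "a / x i \<noteq> 0" "w / p i \<noteq> 0"
      using assms(2-5) that by auto
    have "qpoch (x i) (p i) (- int m) / qpoch (a / x i) (w / p i) (- int m) =
      (\<Prod>j\<in>{1..m}. - (p i ^ j / x i)) / (\<Prod>j\<in>{1..m}. - ((w / p i) ^ j / (a / x i))) *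
      (qpoch ((w / p i) / (a / x i)) (w / p i) (int m) / qpoch (p i / x i) (p i) (int m))"
      unfolding qpoch_minus_of_nat_reflect[OF nz(1,2)] qpoch_minus_of_nat_reflect[OF nz(3,4)]
      by (simp only: divide_divide_times_eq times_divide_times_eq mult.commute)
    also have "(\<Prod>j\<in>{1..m}. - (p i ^ j / x i)) / (\<Prod>j\<in>{1..m}. - ((w / p i) ^ j / (a / x i)))
        = (\<Prod>j\<in>{1..m}. c i j)"
      unfolding prod_dividef[symmetric] c_def using nz assms(2,3)
      by (intro prod.cong refl) (simp add: field_simps power2_eq_square power_mult_distrib)
    also have "(w / p i) / (a / x i) = x i * w / (a * p i)"
      using nz assms(2) by (simp add: field_simps)
    finally show ?thesis .
  qed
  have "(\<Prod>i\<in>I. c i j) = 1" for j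
  proof -
    have "(\<Prod>i\<in>I. c i j) = a ^ card I / (\<Prod>i\<in>I. x i) ^ 2 * ((\<Prod>i\<in>I. p i) ^ 2 / w ^ card I) ^ j"
      by (simp add: c_def prod.distrib prod_dividef prod_power_distrib[symmetric])
    then show ?thesis using assms by (simp add: prod_zero_iff)
  qed
  then have "(\<Prod>i\<in>I. \<Prod>j\<in>{1..m}. c i j) = 1"
    by (subst prod.swap) simp
  moreover have "poised_ratio a w I x p (- int m) = (\<Prod>i\<in>I. \<Prod>j\<in>{1..m}. c i j) *
    (\<Prod>i\<in>I. qpoch (x i * w / (a * p i)) (w / p i) (int m) / qpoch (p i / x i) (p i) (int m))"
    unfolding poised_ratio_def prod.distrib[symmetric] by (rule prod.cong[OF refl pair])
  ultimately show ?thesis by simp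
qed

lemma LIMSEQ_poised_ratio_minus:
  assumes "finite I" "a \<noteq> 0" "w \<noteq> 0" "\<And>i. i \<in> I \<Longrightarrow> x i \<noteq> 0" "\<And>i. i \<in> I \<Longrightarrow> p i \<noteq> 0"
    and "a ^ card I = (\<Prod>i\<in>I. x i) ^ 2" "w ^ card I = (\<Prod>i\<in>I. p i) ^ 2"
    and "\<And>i. i \<in> I \<Longrightarrow> norm (p i) < 1" "\<And>i. i \<in> I \<Longrightarrow> norm (w / p i) < 1"
    and "\<And>i. i \<in> I \<Longrightarrow> qinf (p i / x i) (p i) \<noteq> 0"
  shows "(\<lambda>m. poised_ratio a w I x p (- int m))
    \<longlonglongrightarrow> (\<Prod>i\<in>I. qinf (x i * w / (a * p i)) (w / p i) / qinf (p i / x i) (p i))"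
proof -
  have "poised_ratio a w I x p (- int m) =
    (\<Prod>i\<in>I. qpoch (x i * w / (a * p i)) (w / p i) (int m) / qpoch (p i / x i) (p i) (int m))" for m
    using assms(1-7) by (rule poised_ratio_minus_of_nat)
  then show ?thesis
    unfolding qpoch_of_nat by (simp only:) (intro tendsto_prod tendsto_divide LIMSEQ_qinf assms)
qed

text \<open>Evaluated at A = a w^k, B = b q^k, ..., G = g v^k, this is the summand of the theorem
  divided by its Pochhammer ratio.\<close>

definition telescoping_factor ::
    "complex \<Rightarrow> complex \<Rightarrow> complex \<Rightarrow> complex \<Rightarrow> complex \<Rightarrow> complex \<Rightarrow> complex \<Rightarrow> complex" where
  "telescoping_factor A B C D E F G =
     ((1-A)*(1-A/(E*F))*(1-F*G/A)*(1-E*G/A)) / ((1-G/A)*(1-E*F*G/A)*(1-A/F)*(1-A/E))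
     * (1 - ((1-A/(C*D))*(1-A/(B*D))*(1-A/(B*C))) / ((1-A/B)*(1-A/C)*(1-A/D))
          * ((1-E)*(1-F)*(1-G)) / ((1-F*G/A)*(1-E*G/A)*(1-E*F/A)))"

lemma telescoping_factor_eq:
  fixes A B C D E F G :: complex
  assumes nz: "A \<noteq> 0" "B \<noteq> 0" "C \<noteq> 0" "D \<noteq> 0" "E \<noteq> 0" "F \<noteq> 0" "G \<noteq> 0"
    and bal: "A ^ 3 = B*C*D*E*F*G"
    and ne: "A \<noteq> B" "A \<noteq> C" "A \<noteq> D" "A \<noteq> E" "A \<noteq> F" "A \<noteq> G"
      "A \<noteq> E*F*G" "A \<noteq> F*G" "A \<noteq> E*G" "A \<noteq> E*F"
  shows "telescoping_factor A B C D E F G =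
    1 - ((1-B)*(1-C)*(1-D)*(1-E)*(1-F)*(1-G)) / ((1-A/B)*(1-A/C)*(1-A/D)*(1-A/E)*(1-A/F)*(1-A/G))"
    (is "_ = 1 - ?R")
proof -
  define L where "L = ((1-A)*(1-A/(E*F))*(1-F*G/A)*(1-E*G/A)) / ((1-G/A)*(1-E*F*G/A)*(1-A/F)*(1-A/E))"
  define M where "M = ((1-A/(C*D))*(1-A/(B*D))*(1-A/(B*C))) / ((1-A/B)*(1-A/C)*(1-A/D))
    * ((1-E)*(1-F)*(1-G)) / ((1-F*G/A)*(1-E*G/A)*(1-E*F/A))"
  have factor: "telescoping_factor A B C D E F G = L * (1 - M)"
    by (simp add: telescoping_factor_def L_def M_def)
  \<comment> \<open>Eliminate G and introduce the polynomial factors as opaque atoms, so that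
    field_simps only clears denominators instead of expanding them.\<close>
  define P where "P = B*C*D"
  have G: "G = A^3/(P*E*F)" using bal nz by (simp add: P_def field_simps)
  define u y1 y2 h p2 m where "u = E*F - A" and "y1 = P*E - A^2" and "y2 = P*F - A^2"
    and "h = P*E*F - A^2" and "p2 = P - A^2" and "m = P*E*F - A^3"
  define bA cA dA eA fA where "bA = B - A" and "cA = C - A" and "dA = D - A"
    and "eA = E - A" and "fA = F - A"
  define Q W V where "Q = (C*D-A)*(B*D-A)*(B*C-A)" and "W = (1-B)*(1-C)*(1-D)"
    and "V = (1-E)*(1-F)"
  have P0: "P \<noteq> 0" using nz by (simp add: P_def)
  have nf: "1 - F*G/A = y1/(P*E)" "1 - E*G/A = y2/(P*F)" "1 - G/A = h/(P*E*F)"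
    "1 - E*F*G/A = p2/P" "1 - E*F/A = -u/A" "1 - G = m/(P*E*F)" "1 - A/G = -h/A^2"
    "1 - A/(E*F) = u/(E*F)"
    using nz P0 unfolding G u_def y1_def y2_def h_def p2_def m_def
    by (simp_all add: field_simps power2_eq_square power3_eq_cube)
  have nfl: "1 - A/B = bA/B" "1 - A/C = cA/C" "1 - A/D = dA/D" "1 - A/E = eA/E" "1 - A/F = fA/F"
    "1 - A/(C*D) = (C*D-A)/(C*D)" "1 - A/(B*D) = (B*D-A)/(B*D)" "1 - A/(B*C) = (B*C-A)/(B*C)"
    using nz unfolding bA_def cA_def dA_def eA_def fA_def by (simp_all add: field_simps)
  have nzs: "u \<noteq> 0" "y1 \<noteq> 0" "y2 \<noteq> 0" "h \<noteq> 0" "p2 \<noteq> 0"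
    "bA \<noteq> 0" "cA \<noteq> 0" "dA \<noteq> 0" "eA \<noteq> 0" "fA \<noteq> 0"
  proof -
    have "y1/(P*E) \<noteq> 0" "y2/(P*F) \<noteq> 0" "h/(P*E*F) \<noteq> 0" "p2/P \<noteq> 0"
      unfolding nf[symmetric] using ne nz by (auto simp: field_simps)
    then show "u \<noteq> 0" "y1 \<noteq> 0" "y2 \<noteq> 0" "h \<noteq> 0" "p2 \<noteq> 0"
      "bA \<noteq> 0" "cA \<noteq> 0" "dA \<noteq> 0" "eA \<noteq> 0" "fA \<noteq> 0"
      using ne by (auto simp: u_def bA_def cA_def dA_def eA_def fA_def)
  qed
  have poly1: "(1-A)*u*y1*y2 - h*p2*fA*eA = -A*(P-A)*V*m"
    unfolding V_def u_def y1_def y2_def h_def p2_def m_def eA_def fA_def by algebra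
  have poly2: "(1-A)*Q = A*p2*W + (P-A)*bA*cA*dA"
    unfolding Q_def W_def p2_def P_def bA_def cA_def dA_def by algebra
  have L: "L = (1-A)*u*y1*y2/(h*p2*fA*eA)"
    unfolding L_def nf nfl using nz P0 nzs by (simp add: field_simps)
  have M: "M = Q*V*m*A/(bA*cA*dA*y1*y2*(-u))"
    unfolding M_def nf nfl Q_def V_def using nz P0 nzs by (simp add: field_simps P_def)
  have R: "?R = W*V*m*A^2/(bA*cA*dA*eA*fA*(-h))"
    unfolding nf nfl W_def V_def using nz P0 nzs by (simp add: field_simps P_def)
  have combine: "x * (1 - y) = 1 - r" if "x * y = r + (x - 1)" for x y r :: complex
    using that by (simp add: algebra_simps)
  \<comment> \<open>By poly2, L M splits into R and a remainder that equals L - 1 by poly1.\<close>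
  have "L * M = - ((1-A)*Q) * (V*m*A) / (h*p2*fA*eA*bA*cA*dA)"
    unfolding L M using nz nzs by (simp add: field_simps)
  also have "\<dots> = ?R - A*(P-A)*V*m / (h*p2*fA*eA)"
    unfolding poly2 R using nz nzs by (simp add: field_simps power2_eq_square)
  also have "\<dots> = ?R + (L - 1)"
    unfolding L using poly1 nzs by (simp add: field_simps)
  finally show ?thesis unfolding factor by (rule combine)
qed

lemma prod_lessThan_six: "(\<Prod>i<6::nat. h i) = h 0 * h 1 * h 2 * h 3 * h 4 * (h 5 :: 'a :: comm_monoid_mult)"
  by (simp add: numeral_eq_Suc)

lemma poised_ratio_six_diff:
  fixes a w :: complex and x p :: "nat \<Rightarrow> complex" and k :: int
  defines "A \<equiv> a * w powi k" and "X \<equiv> \<lambda>i. x i * p i powi k"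
  assumes nz: "a \<noteq> 0" "w \<noteq> 0" "\<And>i. i < 6 \<Longrightarrow> x i \<noteq> 0" "\<And>i. i < 6 \<Longrightarrow> p i \<noteq> 0"
    and bal: "a ^ 3 = x 0 * x 1 * x 2 * x 3 * x 4 * x 5" "w ^ 3 = p 0 * p 1 * p 2 * p 3 * p 4 * p 5"
    and ok: "\<And>i. i < 6 \<Longrightarrow> qpoch_ok (x i) (p i) k \<and> qpoch_ok (a / x i) (w / p i) k"
    and ne: "\<And>i. i < 6 \<Longrightarrow> A \<noteq> X i"
      "A \<noteq> X 3 * X 4 * X 5" "A \<noteq> X 4 * X 5" "A \<noteq> X 3 * X 5" "A \<noteq> X 3 * X 4"
  shows "poised_ratio a w {..<6} x p k - poised_ratio a w {..<6} x p (k + 1) =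
    poised_ratio a w {..<6} x p k * telescoping_factor A (X 0) (X 1) (X 2) (X 3) (X 4) (X 5)"
proof -
  have "(w powi k) ^ 3 = (p 0 * p 1 * p 2 * p 3 * p 4 * p 5) powi k"
    unfolding bal(2)[symmetric] by (simp add: power_int_power power_int_power' mult.commute)
  then have "A ^ 3 = X 0 * X 1 * X 2 * X 3 * X 4 * X 5"
    by (simp add: A_def X_def power_mult_distrib bal(1) power_int_mult_distrib ac_simps)
  then have factor: "telescoping_factor A (X 0) (X 1) (X 2) (X 3) (X 4) (X 5) =
    1 - (\<Prod>i<6. (1 - X i) / (1 - A / X i))"
    unfolding prod_lessThan_six using nz ne
    by (subst telescoping_factor_eq) (simp_all add: A_def X_def times_divide_times_eq)
  have "poised_ratio a w {..<6} x p (k + 1) =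
    poised_ratio a w {..<6} x p k * (\<Prod>i<6. (1 - X i) / (1 - A / X i))"
    unfolding A_def X_def using ok by (intro poised_ratio_add_one) simp
  then show ?thesis
    unfolding factor by (simp only: right_diff_distrib[of "poised_ratio a w {..<6} x p k"] mult_1_right)
qed

theorem mainTheorem4:
  fixes a b c d e f g q r s t u v w :: complex
  assumes nz: "a \<noteq> 0" "b \<noteq> 0" "c \<noteq> 0" "d \<noteq> 0" "e \<noteq> 0" "f \<noteq> 0" "g \<noteq> 0"
              "q \<noteq> 0" "r \<noteq> 0" "s \<noteq> 0" "t \<noteq> 0" "u \<noteq> 0" "v \<noteq> 0" "w \<noteq> 0"
    and bal: "a ^ 3 = b * c * d * e * f * g" "w ^ 3 = q * r * s * t * u * v"
    and small: "norm q < 1" "norm r < 1" "norm s < 1" "norm t < 1" "norm u < 1" "norm v < 1"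
      "norm (w / q) < 1" "norm (w / r) < 1" "norm (w / s) < 1"
      "norm (w / t) < 1" "norm (w / u) < 1" "norm (w / v) < 1"
    and wd_num: "\<And>k::int. qpoch_ok b q k \<and> qpoch_ok c r k \<and> qpoch_ok d s k \<and>
                           qpoch_ok e t k \<and> qpoch_ok f u k \<and> qpoch_ok g v k"
    and wd_den: "\<And>k::int.
        qpoch_ok (a / b) (w / q) k \<and> qpoch (a / b) (w / q) k \<noteq> 0 \<and>
        qpoch_ok (a / c) (w / r) k \<and> qpoch (a / c) (w / r) k \<noteq> 0 \<and>
        qpoch_ok (a / d) (w / s) k \<and> qpoch (a / d) (w / s) k \<noteq> 0 \<and>
        qpoch_ok (a / e) (w / t) k \<and> qpoch (a / e) (w / t) k \<noteq> 0 \<and>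
        qpoch_ok (a / f) (w / u) k \<and> qpoch (a / f) (w / u) k \<noteq> 0 \<and>
        qpoch_ok (a / g) (w / v) k \<and> qpoch (a / g) (w / v) k \<noteq> 0"
    and wd_fac: "\<And>k::int.
        1 - g * (v / w) powi k / a \<noteq> 0 \<and>
        1 - e * f * g * (t * u * v / w) powi k / a \<noteq> 0 \<and>
        1 - a * (w / u) powi k / f \<noteq> 0 \<and>
        1 - a * (w / t) powi k / e \<noteq> 0 \<and>
        1 - a * (w / q) powi k / b \<noteq> 0 \<and>
        1 - a * (w / r) powi k / c \<noteq> 0 \<and>
        1 - a * (w / s) powi k / d \<noteq> 0 \<and>
        1 - f * g * (u * v / w) powi k / a \<noteq> 0 \<and>
        1 - e * g * (t * v / w) powi k / a \<noteq> 0 \<and>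
        1 - e * f * (t * u / w) powi k / a \<noteq> 0"
    and wd_rhs: "qinf (q / b) q \<noteq> 0" "qinf (r / c) r \<noteq> 0" "qinf (s / d) s \<noteq> 0"
      "qinf (t / e) t \<noteq> 0" "qinf (u / f) u \<noteq> 0" "qinf (v / g) v \<noteq> 0"
      "qinf (a / b) (w / q) \<noteq> 0" "qinf (a / c) (w / r) \<noteq> 0" "qinf (a / d) (w / s) \<noteq> 0"
      "qinf (a / e) (w / t) \<noteq> 0" "qinf (a / f) (w / u) \<noteq> 0" "qinf (a / g) (w / v) \<noteq> 0"
  shows "bilateral_sums
    (\<lambda>k::int.
      ((1 - a * w powi k) * (1 - a * (w / (t * u)) powi k / (e * f))
        * (1 - f * g * (u * v / w) powi k / a) * (1 - e * g * (t * v / w) powi k / a))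
      / ((1 - g * (v / w) powi k / a) * (1 - e * f * g * (t * u * v / w) powi k / a)
        * (1 - a * (w / u) powi k / f) * (1 - a * (w / t) powi k / e))
      * ((qpoch b q k * qpoch c r k * qpoch d s k * qpoch e t k * qpoch f u k * qpoch g v k)
        / (qpoch (a / b) (w / q) k * qpoch (a / c) (w / r) k * qpoch (a / d) (w / s) k
           * qpoch (a / e) (w / t) k * qpoch (a / f) (w / u) k * qpoch (a / g) (w / v) k))
      * (1 - ((1 - a * (w / (r * s)) powi k / (c * d)) * (1 - a * (w / (q * s)) powi k / (b * d))
                * (1 - a * (w / (q * r)) powi k / (b * c)))
             / ((1 - a * (w / q) powi k / b) * (1 - a * (w / r) powi k / c)
                * (1 - a * (w / s) powi k / d))
           * ((1 - e * t powi k) * (1 - f * u powi k) * (1 - g * v powi k))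
             / ((1 - f * g * (u * v / w) powi k / a) * (1 - e * g * (t * v / w) powi k / a)
                * (1 - e * f * (t * u / w) powi k / a))))
    ((qinf (b * w / (a * q)) (w / q) * qinf (c * w / (a * r)) (w / r) * qinf (d * w / (a * s)) (w / s)
      * qinf (e * w / (a * t)) (w / t) * qinf (f * w / (a * u)) (w / u) * qinf (g * w / (a * v)) (w / v))
     / (qinf (q / b) q * qinf (r / c) r * qinf (s / d) s * qinf (t / e) t * qinf (u / f) u * qinf (v / g) v)
     - (qinf b q * qinf c r * qinf d s * qinf e t * qinf f u * qinf g v)
     / (qinf (a / b) (w / q) * qinf (a / c) (w / r) * qinf (a / d) (w / s)
        * qinf (a / e) (w / t) * qinf (a / f) (w / u) * qinf (a / g) (w / v)))"
proof -
  define x where "x = (!) [b, c, d, e, f, g]"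
  define p where "p = (!) [q, r, s, t, u, v]"
  let ?P = "poised_ratio a w {..<6} x p"
  have six: "i < 6 \<longleftrightarrow> i = 0 \<or> i = 1 \<or> i = 2 \<or> i = 3 \<or> i = 4 \<or> i = 5" for i :: nat
    by auto
  have step: "?P k - ?P (k + 1) = ?P k * telescoping_factor (a * w powi k) (x 0 * p 0 powi k)
      (x 1 * p 1 powi k) (x 2 * p 2 powi k) (x 3 * p 3 powi k) (x 4 * p 4 powi k) (x 5 * p 5 powi k)"
    for k
    by (rule poised_ratio_six_diff) (use nz bal wd_num[of k] wd_den[of k] wd_fac[of k] in
        \<open>auto simp: six x_def p_def power_int_mult_distrib power_int_divide_distrib field_simps\<close>)
  have p_small: "norm (p i) < 1" and w_p_small: "norm (w / p i) < 1" if "i \<in> {..<6}" for i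
    using that small by (auto simp: six p_def)
  have at_top: "(\<lambda>n. ?P (int n)) \<longlonglongrightarrow> (\<Prod>i<6. qinf (x i) (p i) / qinf (a / x i) (w / p i))"
    using wd_rhs by (intro LIMSEQ_poised_ratio p_small w_p_small) (auto simp: six x_def p_def)
  have "a ^ card {..<6::nat} = (\<Prod>i<6. x i) ^ 2" "w ^ card {..<6::nat} = (\<Prod>i<6. p i) ^ 2"
    unfolding prod_lessThan_six x_def p_def by (simp_all flip: bal add: power_mult[symmetric])
  then have at_bot: "(\<lambda>m. ?P (- int m))
      \<longlonglongrightarrow> (\<Prod>i<6. qinf (x i * w / (a * p i)) (w / p i) / qinf (p i / x i) (p i))"
    using nz wd_rhs by (intro LIMSEQ_poised_ratio_minus p_small w_p_small) (auto simp: six x_def p_def)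
  \<comment> \<open>once powi is distributed, the summand and ?P k times the factor normalise alike\<close>
  from bilateral_sums_telescope[where P = ?P, OF step[symmetric] at_bot at_top]
  show ?thesis
    by (simp add: telescoping_factor_def poised_ratio_def prod_lessThan_six x_def p_def
        power_int_mult_distrib power_int_divide_distrib ac_simps)
qed

end
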